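(* Let $T$ be a finite semi-simplicial triangulation of a compact surface $S$ (possibly with boundary), and let $\Delta: E(T) \to (0,\pi]$ be an assignment of dihedral angles to the edges of $T$ satisfying the following condition: for every set of faces $\mathcal{F} \subseteq F(T)$, writing $E(\mathcal{F})$ for the set of edges of $T$ incident to some face in $\mathcal{F}$, $$\sum_{e \in E(\mathcal{F})} \Delta(e) \ge \pi |\mathcal{F}|,$$ with equality if and only if $\mathcal{F} = F(T)$ or $E(\mathcal{F}) = \emptyset$. Let $t_1, \ldots, t_n$ be a collection of closed triangles (faces) of $T$, let $\mathcal{F} = t_1 \cup \cdots \cup t_n$, and assume $\mathcal{F} \ne T$. Let $\sum_\partial \mathcal{F}$ denote the sum of $\Delta(e)$ over the boundary edges $e$ of $\mathcal{F}$. Then $$0 < \operatorname{excess} \mathcal{F} < \sum_\partial \mathcal{F}.$$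
   Context: A semi-simplicial triangulation is one in which distinct closed cells may intersect in a collection of lower-dimensional cells. $V(T)$, $E(T)$, $F(T)$ denote the vertices, edges and faces of $T$. For a subcomplex $\mathcal{F}$ of $T$ (here a union of closed faces), its excess is $\operatorname{excess}\mathcal{F} = \sum_{e \in E(\mathcal{F})} \Delta(e) - \pi |F(\mathcal{F})|$, where $E(\mathcal{F})$ is the set of edges of faces of $\mathcal{F}$ and $|F(\mathcal{F})|$ is the number of faces of $\mathcal{F}$. The boundary edges of $\mathcal{F}$ are the edges lying in the intersection of $\mathcal{F}$ with the union $\overline{\mathcal{F}}$ of the closed faces of $T$ not among $t_1,\dots,t_n$ (i.e., edges incident to a face of $\mathcal{F}$ on one side and to a face not in $\mathcal{F}$ on the other). *)

theory Defs
  imports Complex_Main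
begin

text \<open>Combinatorial model of a finite semi-simplicial triangulation T of a compact
surface (possibly with boundary), at the level of faces and edges.
FF is the (finite) set of faces, EE the set of edges, and side f i (i < 3) is the edge
of T glued to the i-th side of the face f.  Distinct sides of the same face may be
glued to the same edge (semi-simplicial).  Every edge is a side of some face, and,
since T triangulates a surface, every edge is glued to exactly one or two face sides
(one for edges on the boundary of the surface, two for interior edges).\<close>

definition side_pairs :: "'f set \<Rightarrow> ('f \<Rightarrow> nat \<Rightarrow> 'e) \<Rightarrow> 'e \<Rightarrow> ('f \<times> nat) set" where
  "side_pairs FF side e = {(f, i). f \<in> FF \<and> i < 3 \<and> side f i = e}"

definition surface_triangulation ::
  "'f set \<Rightarrow> 'e set \<Rightarrow> ('f \<Rightarrow> nat \<Rightarrow> 'e) \<Rightarrow> bool" where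
  "surface_triangulation FF EE side \<longleftrightarrow>
     finite FF \<and> finite EE \<and>
     (\<forall>f\<in>FF. \<forall>i<3. side f i \<in> EE) \<and>
     (\<forall>e\<in>EE. card (side_pairs FF side e) \<in> {1, 2})"

definition edges_of :: "('f \<Rightarrow> nat \<Rightarrow> 'e) \<Rightarrow> 'f set \<Rightarrow> 'e set" where
  "edges_of side Fs = {side f i | f i. f \<in> Fs \<and> i < 3}"

definition angle_condition ::
  "'f set \<Rightarrow> 'e set \<Rightarrow> ('f \<Rightarrow> nat \<Rightarrow> 'e) \<Rightarrow> ('e \<Rightarrow> real) \<Rightarrow> bool" where
  "angle_condition FF EE side \<Delta> \<longleftrightarrow>
     (\<forall>e\<in>EE. 0 < \<Delta> e \<and> \<Delta> e \<le> pi) \<and>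
     (\<forall>Fs. Fs \<subseteq> FF \<longrightarrow>
        (\<Sum>e\<in>edges_of side Fs. \<Delta> e) \<ge> pi * real (card Fs) \<and>
        ((\<Sum>e\<in>edges_of side Fs. \<Delta> e) = pi * real (card Fs)
           \<longleftrightarrow> Fs = FF \<or> edges_of side Fs = {}))"

definition excess :: "('f \<Rightarrow> nat \<Rightarrow> 'e) \<Rightarrow> ('e \<Rightarrow> real) \<Rightarrow> 'f set \<Rightarrow> real" where
  "excess side \<Delta> Fs = (\<Sum>e\<in>edges_of side Fs. \<Delta> e) - pi * real (card Fs)"

definition boundary_edges :: "'f set \<Rightarrow> ('f \<Rightarrow> nat \<Rightarrow> 'e) \<Rightarrow> 'f set \<Rightarrow> 'e set" where
  "boundary_edges FF side Fs =
     {e. (\<exists>f\<in>Fs. \<exists>i<3. side f i = e) \<and> (\<exists>g\<in>FF - Fs. \<exists>j<3. side g j = e)}"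

end

theory Submission
  imports Defs
begin

text \<open>The complement \<G> = F(T) - \<F> is again a nonempty proper set of faces, so the angle
condition makes both excesses positive.  Every edge of \<F> \<union> \<G> = F(T) is an edge of \<F> or of
\<G>, and exactly the boundary edges of \<F> are edges of both; since excess F(T) = 0, the sum
excess \<F> + excess \<G> is the boundary sum of \<F>, and positivity of excess \<G> gives the strict
upper bound.\<close>

lemma finite_edges_of:
  assumes "finite Fs"
  shows "finite (edges_of side Fs)"
proof -
  have "edges_of side Fs = (\<lambda>(f, i). side f i) ` (Fs \<times> {..<3})"
    unfolding edges_of_def by auto
  then show ?thesis
    using assms by simp
qed

lemma edges_of_eq_empty_iff [simp]: "edges_of side Fs = {} \<longleftrightarrow> Fs = {}"
  unfolding edges_of_def by fastforce

lemma edges_of_Un: "edges_of side (A \<union> B) = edges_of side A \<union> edges_of side B"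
  unfolding edges_of_def by blast

lemma boundary_edges_eq_Int:
  "boundary_edges FF side Fs = edges_of side Fs \<inter> edges_of side (FF - Fs)"
  unfolding boundary_edges_def edges_of_def by (rule set_eqI) (simp, metis Diff_iff)

lemma excess_Un_disjoint:
  assumes "finite A" and "finite B" and "A \<inter> B = {}"
  shows "excess side \<Delta> A + excess side \<Delta> B
           = excess side \<Delta> (A \<union> B) + (\<Sum>e\<in>edges_of side A \<inter> edges_of side B. \<Delta> e)"
proof -
  have "(\<Sum>e\<in>edges_of side (A \<union> B). \<Delta> e) + (\<Sum>e\<in>edges_of side A \<inter> edges_of side B. \<Delta> e)
      = (\<Sum>e\<in>edges_of side A. \<Delta> e) + (\<Sum>e\<in>edges_of side B. \<Delta> e)"
    unfolding edges_of_Un using assms(1,2) by (intro sum.union_inter finite_edges_of)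
  moreover have "card (A \<union> B) = card A + card B"
    using assms by (rule card_Un_disjoint)
  ultimately show ?thesis
    unfolding excess_def by (simp add: algebra_simps)
qed

lemma excess_pos:
  assumes "angle_condition FF EE side \<Delta>"
    and "Fs \<subseteq> FF" and "Fs \<noteq> {}" and "Fs \<noteq> FF"
  shows "0 < excess side \<Delta> Fs"
proof -
  have "(\<Sum>e\<in>edges_of side Fs. \<Delta> e) \<ge> pi * real (card Fs)"
    and "(\<Sum>e\<in>edges_of side Fs. \<Delta> e) \<noteq> pi * real (card Fs)"
    using assms unfolding angle_condition_def by auto
  then show ?thesis
    unfolding excess_def by linarith
qed

lemma excess_all_faces:
  assumes "angle_condition FF EE side \<Delta>"
  shows "excess side \<Delta> FF = 0"
  using assms unfolding angle_condition_def excess_def by simp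

theorem lemma2p5:
  fixes FF :: "'f set" and EE :: "'e set" and side :: "'f \<Rightarrow> nat \<Rightarrow> 'e"
    and \<Delta> :: "'e \<Rightarrow> real" and Fs :: "'f set"
  assumes "surface_triangulation FF EE side"
    and "angle_condition FF EE side \<Delta>"
    and "Fs \<subseteq> FF" and "Fs \<noteq> {}" and "Fs \<noteq> FF"
  shows "0 < excess side \<Delta> Fs \<and>
         excess side \<Delta> Fs < (\<Sum>e\<in>boundary_edges FF side Fs. \<Delta> e)"
proof -
  have "finite FF"
    using assms(1) unfolding surface_triangulation_def by simp
  moreover have "Fs \<union> (FF - Fs) = FF"
    using assms(3) by blast
  ultimately have "excess side \<Delta> Fs + excess side \<Delta> (FF - Fs)
      = excess side \<Delta> FF + (\<Sum>e\<in>boundary_edges FF side Fs. \<Delta> e)"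
    using excess_Un_disjoint[of Fs "FF - Fs" side \<Delta>] assms(3)
    by (simp add: boundary_edges_eq_Int finite_subset)
  moreover have "excess side \<Delta> FF = 0"
    using assms(2) by (rule excess_all_faces)
  moreover have "0 < excess side \<Delta> Fs"
    using assms(2-5) by (rule excess_pos)
  moreover have "0 < excess side \<Delta> (FF - Fs)"
    using assms(2-5) by (intro excess_pos[OF assms(2)]) auto
  ultimately show ?thesis
    by linarith
qed

end
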